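(* For every $a\in S_A$ and every $b\in S_B$, the vertices $a$ and $b$ are adjacent in $\Gamma$.
   Context: All graphs are finite and simple. A graph $G$ is a minimal prime graph complement if $G$ has at least $2$ vertices and: (1) the complement $\overline{G}$ is connected; (2) $G$ is triangle-free; (3) $G$ is $3$-colorable; (4) for any two distinct nonadjacent vertices $u,v$ of $G$, adding the edge $uv$ to $G$ yields a graph that either contains a triangle or is not $3$-colorable. Standing setup: $\Gamma$ is a minimal prime graph complement with a vertex $X$ of degree $2$, whose two neighbors are $A$ and $B$. Among the vertices of $\Gamma$ other than $X,A,B$: $S_A$ is the set of those adjacent to $A$ but not $B$; $S_B$ the set of those adjacent to $B$ but not $A$; $S_Y$ the set of those adjacent to both $A$ and $B$; $S_Z$ the set of those adjacent to neither $A$ nor $B$. *)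

theory Defs
  imports Main
begin

definition simple_graph :: "'a set \<Rightarrow> ('a \<Rightarrow> 'a \<Rightarrow> bool) \<Rightarrow> bool" where
  "simple_graph V E \<longleftrightarrow> finite V \<and> (\<forall>x y. E x y \<longrightarrow> x \<in> V \<and> y \<in> V)
     \<and> (\<forall>x y. E x y \<longrightarrow> E y x) \<and> (\<forall>x. \<not> E x x)"

definition complement_edge :: "'a set \<Rightarrow> ('a \<Rightarrow> 'a \<Rightarrow> bool) \<Rightarrow> 'a \<Rightarrow> 'a \<Rightarrow> bool" where
  "complement_edge V E x y \<longleftrightarrow> x \<in> V \<and> y \<in> V \<and> x \<noteq> y \<and> \<not> E x y"

definition connected_graph :: "'a set \<Rightarrow> ('a \<Rightarrow> 'a \<Rightarrow> bool) \<Rightarrow> bool" where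
  "connected_graph V E \<longleftrightarrow> (\<forall>x\<in>V. \<forall>y\<in>V. E\<^sup>*\<^sup>* x y)"

definition triangle_free :: "'a set \<Rightarrow> ('a \<Rightarrow> 'a \<Rightarrow> bool) \<Rightarrow> bool" where
  "triangle_free V E \<longleftrightarrow> \<not> (\<exists>x\<in>V. \<exists>y\<in>V. \<exists>z\<in>V. E x y \<and> E y z \<and> E x z)"

definition three_colorable :: "'a set \<Rightarrow> ('a \<Rightarrow> 'a \<Rightarrow> bool) \<Rightarrow> bool" where
  "three_colorable V E \<longleftrightarrow> (\<exists>c :: 'a \<Rightarrow> nat. (\<forall>x\<in>V. c x < 3)
      \<and> (\<forall>x\<in>V. \<forall>y\<in>V. E x y \<longrightarrow> c x \<noteq> c y))"

definition add_edge :: "('a \<Rightarrow> 'a \<Rightarrow> bool) \<Rightarrow> 'a \<Rightarrow> 'a \<Rightarrow> 'a \<Rightarrow> 'a \<Rightarrow> bool" where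
  "add_edge E u v = (\<lambda>x y. E x y \<or> (x = u \<and> y = v) \<or> (x = v \<and> y = u))"

definition minimal_prime_graph_complement :: "'a set \<Rightarrow> ('a \<Rightarrow> 'a \<Rightarrow> bool) \<Rightarrow> bool" where
  "minimal_prime_graph_complement V E \<longleftrightarrow>
     simple_graph V E \<and> card V \<ge> 2 \<and>
     connected_graph V (complement_edge V E) \<and>
     triangle_free V E \<and> three_colorable V E \<and>
     (\<forall>u\<in>V. \<forall>v\<in>V. u \<noteq> v \<and> \<not> E u v \<longrightarrow>
        \<not> triangle_free V (add_edge E u v) \<or> \<not> three_colorable V (add_edge E u v))"

end

theory Submission
  imports Defs
begin

text \<open>Adding an edge between two nonadjacent vertices without a common neighbor creates no
  triangle, so by minimality every proper 3-coloring gives such vertices the same color. Applied to \<open>X\<close> and a vertex of \<open>S\<^sub>Z\<close>, this first shows that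
  \<open>S\<^sub>Z\<close> is independent (both ends of an edge would share the color of \<open>X\<close>); then coloring
  \<open>N(A)\<close> with 0, \<open>N(B) - N(A)\<close> with 1 and the rest with 2 is proper, and it separates \<open>X\<close> from
  any vertex of \<open>S\<^sub>Z\<close>, so \<open>S\<^sub>Z\<close> is empty. Hence every common neighbor of \<open>a\<close> and \<open>b\<close> would be
  adjacent to \<open>A\<close> or \<open>B\<close>, giving a triangle; so \<open>a\<close> and \<open>b\<close> have no common neighbor, yet the
  same coloring separates them.\<close>

definition three_coloring :: "'a set \<Rightarrow> ('a \<Rightarrow> 'a \<Rightarrow> bool) \<Rightarrow> ('a \<Rightarrow> nat) \<Rightarrow> bool" where
  "three_coloring V E c \<longleftrightarrow> (\<forall>x\<in>V. c x < 3) \<and> (\<forall>x\<in>V. \<forall>y\<in>V. E x y \<longrightarrow> c x \<noteq> c y)"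

lemma three_colorable_iff_three_coloring:
  "three_colorable V E \<longleftrightarrow> (\<exists>c. three_coloring V E c)"
  unfolding three_colorable_def three_coloring_def ..

lemma triangle_free_add_edge:
  assumes "simple_graph V E" and "triangle_free V E" and "u \<noteq> v"
    and "\<forall>w\<in>V. \<not> (E u w \<and> E v w)"
  shows "triangle_free V (add_edge E u v)"
  using assms unfolding triangle_free_def add_edge_def simple_graph_def by metis

lemma three_colorable_add_edge:
  assumes "three_coloring V E c" and "c u \<noteq> c v"
  shows "three_colorable V (add_edge E u v)"
  using assms unfolding three_colorable_iff_three_coloring three_coloring_def add_edge_def
  by metis

locale mpgc =
  fixes V :: "'a set" and E :: "'a \<Rightarrow> 'a \<Rightarrow> bool"
  assumes minimal: "minimal_prime_graph_complement V E"
begin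

lemma simple: "simple_graph V E"
  and triangle_free: "triangle_free V E"
  and three_colorable: "three_colorable V E"
  using minimal unfolding minimal_prime_graph_complement_def by auto

lemma edge_sym: "E x y \<Longrightarrow> E y x"
  and edge_in_V: "E x y \<Longrightarrow> x \<in> V \<and> y \<in> V"
  using simple unfolding simple_graph_def by auto

lemma no_triangle: "E x y \<Longrightarrow> E y z \<Longrightarrow> E x z \<Longrightarrow> False"
  using triangle_free edge_in_V unfolding triangle_free_def by blast

lemma adjacent_if_colored_apart:
  assumes u: "u \<in> V" and v: "v \<in> V" and no_common: "\<forall>w\<in>V. \<not> (E u w \<and> E v w)"
    and c: "three_coloring V E c" and apart: "c u \<noteq> c v"
  shows "E u v"
proof (rule ccontr)
  assume "\<not> E u v"
  moreover have "u \<noteq> v" using apart by blast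
  ultimately have "\<not> triangle_free V (add_edge E u v) \<or> \<not> three_colorable V (add_edge E u v)"
    using minimal u v unfolding minimal_prime_graph_complement_def by blast
  moreover have "triangle_free V (add_edge E u v)"
    using triangle_free_add_edge[OF simple triangle_free \<open>u \<noteq> v\<close> no_common] .
  moreover have "three_colorable V (add_edge E u v)"
    using three_colorable_add_edge[OF c apart] .
  ultimately show False by blast
qed

end

locale degree_at_most_two_vertex = mpgc +
  fixes X A B :: 'a
  assumes X: "X \<in> V" and EXA: "E X A"
    and neighbors_X: "\<forall>w\<in>V. E X w \<longrightarrow> w = A \<or> w = B"
begin

definition S_A :: "'a set" where "S_A = {v \<in> V - {X, A, B}. E v A \<and> \<not> E v B}"
definition S_B :: "'a set" where "S_B = {v \<in> V - {X, A, B}. E v B \<and> \<not> E v A}"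
definition S_Z :: "'a set" where "S_Z = {v \<in> V - {X, A, B}. \<not> E v A \<and> \<not> E v B}"

lemma X_colored_as_S_Z:
  assumes z: "z \<in> S_Z" and c: "three_coloring V E c"
  shows "c X = c z"
proof (rule ccontr)
  assume "c X \<noteq> c z"
  moreover have "\<forall>w\<in>V. \<not> (E X w \<and> E z w)"
    using neighbors_X z edge_sym unfolding S_Z_def by blast
  ultimately have "E X z" using adjacent_if_colored_apart[OF X _ _ c] z unfolding S_Z_def by blast
  then show False using neighbors_X z unfolding S_Z_def by blast
qed

lemma S_Z_independent:
  assumes "z\<^sub>1 \<in> S_Z" and "z\<^sub>2 \<in> S_Z"
  shows "\<not> E z\<^sub>1 z\<^sub>2"
proof
  assume edge: "E z\<^sub>1 z\<^sub>2"
  obtain c where c: "three_coloring V E c"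
    using three_colorable unfolding three_colorable_iff_three_coloring ..
  have "c z\<^sub>1 = c z\<^sub>2" using X_colored_as_S_Z[OF _ c] assms by metis
  then show False using c edge edge_in_V unfolding three_coloring_def by blast
qed

definition AB_coloring :: "'a \<Rightarrow> nat" where
  "AB_coloring v = (if E v A then 0 else if E v B then 1 else 2)"

lemma three_coloring_AB_coloring: "three_coloring V E AB_coloring"
  unfolding three_coloring_def
proof (intro conjI ballI impI)
  show "AB_coloring x < 3" for x unfolding AB_coloring_def by simp
  fix x y assume x: "x \<in> V" and y: "y \<in> V" and xy: "E x y"
  have "\<not> (E x A \<and> E y A)" "\<not> (E x B \<and> E y B)"
    using xy no_triangle[of x y A] no_triangle[of x y B] by blast+
  moreover have "\<not> (x \<in> S_Z \<and> y \<in> S_Z)" using xy S_Z_independent by blast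
  moreover have "x \<in> S_Z \<and> y \<in> S_Z" if "\<not> E x A" "\<not> E y A" "\<not> E x B" "\<not> E y B"
  proof -
    have "x \<noteq> X" "y \<noteq> X" using that EXA by auto
    moreover have "x \<noteq> A" "y \<noteq> A" "x \<noteq> B" "y \<noteq> B"
      using that xy edge_sym by blast+
    ultimately show ?thesis using that x y unfolding S_Z_def by blast
  qed
  ultimately show "AB_coloring x \<noteq> AB_coloring y"
    using x y unfolding AB_coloring_def S_Z_def by auto
qed

lemma S_Z_empty: "S_Z = {}"
proof (rule equals0I)
  fix z assume z: "z \<in> S_Z"
  then have "AB_coloring X \<noteq> AB_coloring z"
    using EXA unfolding S_Z_def AB_coloring_def by simp
  then show False using X_colored_as_S_Z[OF z three_coloring_AB_coloring] by blast
qed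

lemma S_A_S_B_no_common_neighbor:
  assumes a: "a \<in> S_A" and b: "b \<in> S_B"
  shows "\<forall>w\<in>V. \<not> (E a w \<and> E b w)"
proof clarify
  fix w assume w: "w \<in> V" "E a w" "E b w"
  have "w \<noteq> X" using neighbors_X a w(2) edge_sym unfolding S_A_def by blast
  moreover have "w \<noteq> A" "w \<noteq> B" using a b w unfolding S_A_def S_B_def by auto
  ultimately have "E w A \<or> E w B" using w(1) S_Z_empty unfolding S_Z_def by blast
  then show False using a b w no_triangle[of a w A] no_triangle[of b w B]
    unfolding S_A_def S_B_def by blast
qed

lemma S_A_S_B_adjacent:
  assumes a: "a \<in> S_A" and b: "b \<in> S_B"
  shows "E a b"
proof (rule adjacent_if_colored_apart[OF _ _ S_A_S_B_no_common_neighbor[OF a b]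
      three_coloring_AB_coloring])
  show "a \<in> V" "b \<in> V" using a b unfolding S_A_def S_B_def by auto
  show "AB_coloring a \<noteq> AB_coloring b"
    using a b unfolding S_A_def S_B_def AB_coloring_def by simp
qed

end

theorem lemma11:
  fixes V :: "'a set" and E :: "'a \<Rightarrow> 'a \<Rightarrow> bool" and X A B a b :: 'a
  assumes mpgc: "minimal_prime_graph_complement V E"
    and X: "X \<in> V" and AB: "A \<noteq> B" and EXA: "E X A" and EXB: "E X B"
    and degX: "\<forall>w\<in>V. E X w \<longrightarrow> w = A \<or> w = B"
    and a: "a \<in> V - {X, A, B}" and aA: "E a A" and aB: "\<not> E a B"
    and b: "b \<in> V - {X, A, B}" and bB: "E b B" and bA: "\<not> E b A"
  shows "E a b"
proof -
  interpret degree_at_most_two_vertex V E X A B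
    using mpgc X EXA degX by unfold_locales
  show ?thesis
    using S_A_S_B_adjacent a aA aB b bB bA unfolding S_A_def S_B_def by blast
qed

end
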